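(* Let $\mathbf x_1,\ldots,\mathbf x_n\in\mathbb{R}^d\setminus\{\mathbf 0\}$ and suppose the logit likelihood $\ell(\beta)=\prod_{i=1}^n\frac{1}{1+\exp(\mathbf x_i^T\beta)}$ has a unique global maximizer on $\mathbb{R}^d$. Let $\pi(\beta)\propto\ell(\beta)$ (flat prior) and let $P(\beta)=\sum_{j=1}^d a_j\beta_j$ be any first-degree polynomial. Then $\lim_{\rho\to\infty}\int_{\partial B_\rho}\pi\,\nabla P\cdot\mathbf n\,d\sigma=0$, where $B_\rho$ is the ball of radius $\rho$ centered at the origin; consequently the zero-variance estimator is unbiased: $\mathbb{E}_\pi[\mathbf a^T\mathbf z]=0$, where $\mathbf z=-\frac12\nabla\ln\pi$.
   Context: $\mathbf n$ is the outward unit normal to the sphere $\partial B_\rho$, $d\sigma$ the surface measure. For linear $P$ and $\psi=P\sqrt\pi$, $\frac{H\psi}{\sqrt\pi}=\mathbf a^T\mathbf z$ where $H=-\frac12\Delta+\frac{\Delta\sqrt\pi}{2\sqrt\pi}$. *)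

theory Defs
  imports "HOL-Analysis.Analysis"
begin

definition logit_lik :: "nat \<Rightarrow> (nat \<Rightarrow> real ^ 'd) \<Rightarrow> real ^ 'd \<Rightarrow> real" where
  "logit_lik n x \<beta> = (\<Prod>i<n. 1 / (1 + exp (x i \<bullet> \<beta>)))"

definition logit_post :: "nat \<Rightarrow> (nat \<Rightarrow> real ^ 'd) \<Rightarrow> real ^ 'd \<Rightarrow> real" where
  "logit_post n x \<beta> = logit_lik n x \<beta> / (\<integral>b. logit_lik n x b \<partial>lborel)"

text \<open>Surface measure on the sphere of radius rho centred at 0 (rho > 0), defined as the
  cone measure: sigma(A) = (d / rho) * lambda({t y | 0 < t <= 1, y in A}), i.e. the image of
  Lebesgue measure on the ball under radial projection onto the sphere, scaled by d / rho.\<close>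
definition sphere_measure :: "real \<Rightarrow> (real ^ 'd) measure" where
  "sphere_measure \<rho> =
     scale_measure (ennreal (real CARD('d) / \<rho>))
       (distr (restrict_space lborel (ball 0 \<rho>)) borel (\<lambda>y. (\<rho> / norm y) *\<^sub>R y))"

end

theory Submission
  imports Defs "HOL-Real_Asymp.Real_Asymp"
begin

text \<open>Uniqueness of the maximiser forces every direction v \<noteq> 0 to have some x i \<bullet> v > 0,
  since otherwise translating the maximiser along v would not lower the likelihood. By compactness
  of the unit sphere the likelihood then decays like exp (- c |\<beta>|). Hence the flux through the
  sphere of radius \<rho> is O(\<rho>^(d-1) e^(-c\<rho>)) and the likelihood is integrable. The score
  a^T z is a multiple of the derivative of the likelihood in direction a, and such a derivative
  integrates to 0: its difference quotients do, by translation invariance of Lebesgue measure,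
  and they converge dominatedly because the log-likelihood is Lipschitz.\<close>

lemma integrable_exp_neg_norm:
  fixes c :: real
  assumes "c > 0"
  shows "integrable lborel (\<lambda>\<beta>::'a::euclidean_space. exp (- c * norm \<beta>))"
proof (rule integrableI_bounded)
  show "(\<lambda>\<beta>::'a. exp (- c * norm \<beta>)) \<in> borel_measurable lborel"
    by measurable
  define V where "V = unit_ball_vol (real DIM('a))"
  define u where "u k = exp (- c * real k) * (V * (real k + 1) ^ DIM('a))" for k :: nat
  have u_nonneg: "u k \<ge> 0" for k
    unfolding u_def V_def by simp
  have "eventually (\<lambda>k. u k \<le> exp (- c / 2 * real k)) sequentially"
    unfolding u_def using assms by real_asymp
  then have "eventually (\<lambda>k. norm (u k) \<le> exp (- c / 2) ^ k) sequentially"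
    by eventually_elim (simp add: u_nonneg exp_of_nat_mult[symmetric] mult.commute)
  moreover have "summable (\<lambda>k. exp (- c / 2) ^ k)"
    using assms by (intro summable_geometric) simp
  ultimately have "summable u"
    by (rule summable_comparison_test_ev)
  let ?shell = "\<lambda>k \<beta>. ennreal (exp (- c * real k)) * indicator (ball (0::'a) (real k + 1)) \<beta>"
  have "(\<integral>\<^sup>+\<beta>. ennreal (norm (exp (- c * norm (\<beta>::'a)))) \<partial>lborel) \<le> (\<integral>\<^sup>+\<beta>. (\<Sum>k. ?shell k \<beta>) \<partial>lborel)"
  proof (rule nn_integral_mono)
    fix \<beta> :: 'a
    define k where "k = nat \<lfloor>norm \<beta>\<rfloor>"
    have k: "real k = of_int \<lfloor>norm \<beta>\<rfloor>"
      unfolding k_def by simp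
    have "real k \<le> norm \<beta>" "norm \<beta> < real k + 1"
      unfolding k by linarith+
    then have "ennreal (norm (exp (- c * norm \<beta>))) \<le> ?shell k \<beta>"
      using assms by (simp add: ennreal_leI)
    also have "\<dots> = (\<Sum>i\<in>{k}. ?shell i \<beta>)"
      by (simp only: sum.insert[OF finite.emptyI] empty_iff not_False_eq_True sum.empty add_0_right)
    also have "\<dots> \<le> (\<Sum>k. ?shell k \<beta>)"
      by (rule sum_le_suminf) (simp_all add: summableI)
    finally show "ennreal (norm (exp (- c * norm \<beta>))) \<le> (\<Sum>k. ?shell k \<beta>)" .
  qed
  also have "\<dots> = (\<Sum>k. \<integral>\<^sup>+\<beta>. ?shell k \<beta> \<partial>lborel)"
    by (rule nn_integral_suminf) (intro borel_measurable_times_ennreal borel_measurable_const borel_measurable_indicator, simp)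
  also have "\<dots> = (\<Sum>k. ennreal (u k))"
    by (intro suminf_cong, subst nn_integral_cmult_indicator)
       (simp_all add: emeasure_ball u_def V_def ennreal_mult')
  also have "\<dots> = ennreal (suminf u)"
    using \<open>summable u\<close> u_nonneg by (simp add: suminf_ennreal2)
  finally show "(\<integral>\<^sup>+\<beta>. ennreal (norm (exp (- c * norm (\<beta>::'a)))) \<partial>lborel) < \<infinity>"
    by (simp add: order_le_less_trans)
qed

lemma integral_translate_lborel:
  fixes f :: "'a::euclidean_space \<Rightarrow> real"
  assumes "integrable lborel f"
  shows "integrable lborel (\<lambda>\<beta>. f (\<beta> + v))" and "(\<integral>\<beta>. f (\<beta> + v) \<partial>lborel) = (\<integral>\<beta>. f \<beta> \<partial>lborel)"
proof -
  have [measurable]: "f \<in> borel_measurable borel"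
    using borel_measurable_integrable[OF assms] by simp
  have "integrable (distr lborel borel ((+) v)) f"
    using assms by (simp add: lborel_distr_plus)
  then show "integrable lborel (\<lambda>\<beta>. f (\<beta> + v))"
    by (subst (asm) integrable_distr_eq) (auto simp: add.commute)
  have "(\<integral>\<beta>. f \<beta> \<partial>distr lborel borel ((+) v)) = (\<integral>\<beta>. f (v + \<beta>) \<partial>lborel)"
    by (rule integral_distr) auto
  then show "(\<integral>\<beta>. f (\<beta> + v) \<partial>lborel) = (\<integral>\<beta>. f \<beta> \<partial>lborel)"
    by (simp add: lborel_distr_plus add.commute)
qed

lemma integral_directional_derivative_eq_0:
  fixes f f' w :: "'a::euclidean_space \<Rightarrow> real"
  assumes f: "integrable lborel f" and w: "integrable lborel w"
    and deriv: "\<And>\<beta>. ((\<lambda>t. f (\<beta> + t *\<^sub>R a)) has_real_derivative f' \<beta>) (at 0)"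
    and lipschitz: "\<And>\<beta> t. 0 < t \<Longrightarrow> t \<le> 1 \<Longrightarrow> \<bar>f (\<beta> + t *\<^sub>R a) - f \<beta>\<bar> \<le> t * w \<beta>"
  shows "(\<integral>\<beta>. f' \<beta> \<partial>lborel) = 0"
proof -
  define h where "h k = inverse (real (Suc k))" for k :: nat
  define q where "q k \<beta> = (f (\<beta> + h k *\<^sub>R a) - f \<beta>) / h k" for k \<beta>
  have h_pos: "0 < h k" and h_le_1: "h k \<le> 1" for k
    unfolding h_def by (auto simp: field_simps)
  have [measurable]: "f \<in> borel_measurable borel"
    using borel_measurable_integrable[OF f] by simp
  have q_meas: "q k \<in> borel_measurable lborel" for k
    unfolding q_def by measurable
  have h_lim: "filterlim h (at 0) sequentially"
    unfolding filterlim_at using LIMSEQ_inverse_real_of_nat h_pos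
    by (auto simp: h_def[abs_def] intro!: always_eventually)
  have q_lim: "(\<lambda>k. q k \<beta>) \<longlonglongrightarrow> f' \<beta>" for \<beta>
  proof -
    have "((\<lambda>t. (f (\<beta> + t *\<^sub>R a) - f \<beta>) / t) \<longlongrightarrow> f' \<beta>) (at 0)"
      using deriv[of \<beta>] by (simp add: DERIV_def)
    from filterlim_compose[OF this h_lim] show ?thesis
      unfolding q_def .
  qed
  have "(\<lambda>k. \<integral>\<beta>. q k \<beta> \<partial>lborel) \<longlonglongrightarrow> (\<integral>\<beta>. f' \<beta> \<partial>lborel)"
  proof (rule integral_dominated_convergence[OF _ q_meas w])
    show "f' \<in> borel_measurable lborel"
      using borel_measurable_LIMSEQ_real[OF q_lim q_meas] .
    show "AE \<beta> in lborel. (\<lambda>k. q k \<beta>) \<longlonglongrightarrow> f' \<beta>"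
      using q_lim by simp
    show "AE \<beta> in lborel. norm (q k \<beta>) \<le> w \<beta>" for k
      using lipschitz[OF h_pos h_le_1] h_pos[of k]
      by (simp add: q_def abs_div pos_divide_le_eq mult.commute)
  qed
  moreover have "(\<integral>\<beta>. q k \<beta> \<partial>lborel) = 0" for k
    using integral_translate_lborel[OF f] f unfolding q_def by (simp add: integral_diff)
  ultimately show ?thesis
    by (simp add: LIMSEQ_const_iff)
qed

text \<open>The radial projection in the definition of sphere_measure maps the centre of the ball
  to 0 rather than to the sphere; this is harmless because the centre is Lebesgue-null.\<close>
lemma abs_integral_sphere_measure_le:
  fixes F :: "real ^ 'd \<Rightarrow> real"
  assumes "\<rho> > 0" and F_meas: "F \<in> borel_measurable borel" and "B \<ge> 0"
    and F_bound: "\<And>y. norm y = \<rho> \<Longrightarrow> \<bar>F y\<bar> \<le> B"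
  shows "\<bar>\<integral>\<beta>. F \<beta> \<partial>sphere_measure \<rho>\<bar>
           \<le> real CARD('d) / \<rho> * B * (unit_ball_vol (real CARD('d)) * \<rho> ^ CARD('d))"
proof (cases "integrable (sphere_measure \<rho>) F")
  case False
  then show ?thesis
    using assms by (simp add: not_integrable_integral_eq)
next
  case True
  define T where "T y = (\<rho> / norm y) *\<^sub>R y" for y :: "real ^ 'd"
  have T_meas: "T \<in> measurable (restrict_space lborel (ball 0 \<rho>)) borel"
    by (rule measurable_restrict_space1) (unfold T_def, measurable)
  have "ennreal \<bar>\<integral>\<beta>. F \<beta> \<partial>sphere_measure \<rho>\<bar> \<le> (\<integral>\<^sup>+\<beta>. norm (F \<beta>) \<partial>sphere_measure \<rho>)"
    using integral_norm_bound_ennreal[OF True] by simp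
  also have "\<dots> = ennreal (real CARD('d) / \<rho>) *
      (\<integral>\<^sup>+y. ennreal (norm (F (T y))) * indicator (ball 0 \<rho>) y \<partial>lborel)"
    unfolding sphere_measure_def T_def[symmetric]
    by (subst nn_integral_scale_measure, use F_meas in simp,
        subst nn_integral_distr[OF T_meas], use F_meas in simp,
        subst nn_integral_restrict_space, simp_all)
  also have "\<dots> \<le> ennreal (real CARD('d) / \<rho>) *
      (\<integral>\<^sup>+y. ennreal B * indicator (ball (0::real ^ 'd) \<rho>) y \<partial>lborel)"
  proof (intro mult_left_mono nn_integral_mono_AE)
    show "AE y in lborel. ennreal (norm (F (T y))) * indicator (ball 0 \<rho>) y
                            \<le> ennreal B * indicator (ball 0 \<rho>) y"
      using AE_lborel_singleton[of 0]
    proof eventually_elim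
      case (elim y)
      then have "norm (T y) = \<rho>"
        using \<open>\<rho> > 0\<close> by (simp add: T_def)
      then show ?case
        using F_bound by (simp add: ennreal_leI indicator_def)
    qed
  qed simp
  also have "\<dots> = ennreal (real CARD('d) / \<rho> * B * (unit_ball_vol (real CARD('d)) * \<rho> ^ CARD('d)))"
    using assms
    by (subst nn_integral_cmult_indicator) (simp_all add: emeasure_ball ennreal_mult[symmetric] mult.assoc)
  finally show ?thesis
    using assms by (simp add: ennreal_le_iff)
qed

lemma one_plus_exp_pos [simp]: "0 < 1 + exp (t :: real)"
  by (simp add: add_pos_pos)

lemma ln_one_plus_exp_add_ge: "ln (1 + exp s) - \<bar>v\<bar> \<le> ln (1 + exp (s + v :: real))"
proof -
  have "exp (- \<bar>v\<bar>) * (1 + exp s) = exp (- \<bar>v\<bar>) + exp (s - \<bar>v\<bar>)"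
    by (simp add: algebra_simps exp_add[symmetric])
  also have "\<dots> \<le> 1 + exp (s + v)"
    by (intro add_mono) simp_all
  finally have "ln (exp (- \<bar>v\<bar>) * (1 + exp s)) \<le> ln (1 + exp (s + v))"
    by simp
  then show ?thesis
    by (simp add: ln_mult_pos)
qed

lemma inverse_one_plus_exp_le: "1 / (1 + exp u) \<le> exp (- max 0 (u :: real))"
  by (cases "u \<le> 0") (auto simp: max_def exp_minus field_simps)

definition logit_nll :: "nat \<Rightarrow> (nat \<Rightarrow> real ^ 'd) \<Rightarrow> real ^ 'd \<Rightarrow> real" where
  "logit_nll n x \<beta> = (\<Sum>i<n. ln (1 + exp (x i \<bullet> \<beta>)))"

definition logit_score :: "nat \<Rightarrow> (nat \<Rightarrow> real ^ 'd) \<Rightarrow> real ^ 'd \<Rightarrow> real ^ 'd \<Rightarrow> real" where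
  "logit_score n x \<beta> v = (\<Sum>i<n. exp (x i \<bullet> \<beta>) / (1 + exp (x i \<bullet> \<beta>)) * (x i \<bullet> v))"

lemma logit_lik_eq_exp: "logit_lik n x \<beta> = exp (- logit_nll n x \<beta>)"
  unfolding logit_lik_def logit_nll_def exp_minus exp_sum[OF finite_lessThan]
  by (simp add: prod_inversef[symmetric] divide_inverse)

lemma logit_lik_pos: "0 < logit_lik n x \<beta>"
  by (simp add: logit_lik_eq_exp)

lemma borel_measurable_logit_lik [measurable]: "logit_lik n x \<in> borel_measurable borel"
  unfolding logit_lik_eq_exp[abs_def] logit_nll_def by measurable

lemma has_derivative_logit_nll: "(logit_nll n x has_derivative logit_score n x \<beta>) (at \<beta>)"
  unfolding logit_nll_def[abs_def] logit_score_def[abs_def]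
  by (rule derivative_eq_intros refl | simp)+ (simp add: divide_inverse mult_ac)

lemma abs_logit_score_le: "\<bar>logit_score n x \<beta> v\<bar> \<le> (\<Sum>i<n. \<bar>x i \<bullet> v\<bar>)"
  unfolding logit_score_def
proof (rule order_trans[OF sum_abs sum_mono])
  fix i
  have "exp (x i \<bullet> \<beta>) / (1 + exp (x i \<bullet> \<beta>)) \<le> 1"
    by simp
  from mult_right_mono[OF this abs_ge_zero]
  show "\<bar>exp (x i \<bullet> \<beta>) / (1 + exp (x i \<bullet> \<beta>)) * (x i \<bullet> v)\<bar> \<le> \<bar>x i \<bullet> v\<bar>"
    by (simp add: abs_mult)
qed

lemma logit_lik_add_le: "logit_lik n x (\<beta> + v) \<le> exp (\<Sum>i<n. \<bar>x i \<bullet> v\<bar>) * logit_lik n x \<beta>"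
proof -
  have "logit_nll n x \<beta> - (\<Sum>i<n. \<bar>x i \<bullet> v\<bar>) \<le> logit_nll n x (\<beta> + v)"
    using sum_mono[of "{..<n}" "\<lambda>i. ln (1 + exp (x i \<bullet> \<beta>)) - \<bar>x i \<bullet> v\<bar>"]
    by (simp add: logit_nll_def inner_add_right ln_one_plus_exp_add_ge sum_subtractf)
  then show ?thesis
    by (simp add: logit_lik_eq_exp exp_add[symmetric])
qed

lemma logit_lik_line_derivative:
  "((\<lambda>t. logit_lik n x (\<beta> + t *\<^sub>R a)) has_real_derivative
     - logit_lik n x (\<beta> + s *\<^sub>R a) * logit_score n x (\<beta> + s *\<^sub>R a) a) (at s)"
  unfolding logit_lik_eq_exp logit_nll_def logit_score_def inner_add_right inner_scaleR_right
  by (rule derivative_eq_intros refl | simp)+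

lemma logit_lik_le_exp_pos_part: "logit_lik n x \<beta> \<le> exp (- (\<Sum>i<n. max 0 (x i \<bullet> \<beta>)))"
proof -
  have "logit_lik n x \<beta> \<le> (\<Prod>i<n. exp (- max 0 (x i \<bullet> \<beta>)))"
    unfolding logit_lik_def by (intro prod_mono) (simp add: inverse_one_plus_exp_le)
  also have "\<dots> = exp (- (\<Sum>i<n. max 0 (x i \<bullet> \<beta>)))"
    by (simp add: exp_sum sum_negf[symmetric])
  finally show ?thesis .
qed

lemma logit_unique_max_pos_direction:
  assumes unique_max: "\<exists>!b. \<forall>\<beta>. logit_lik n x \<beta> \<le> logit_lik n x b"
    and "v \<noteq> 0"
  shows "\<exists>i<n. 0 < x i \<bullet> v"
proof (rule ccontr)
  assume "\<not> ?thesis"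
  then have nonpos: "x i \<bullet> v \<le> 0" if "i < n" for i
    using that by force
  obtain b where b: "\<forall>\<beta>. logit_lik n x \<beta> \<le> logit_lik n x b"
    and b_unique: "\<And>b'. \<forall>\<beta>. logit_lik n x \<beta> \<le> logit_lik n x b' \<Longrightarrow> b' = b"
    using unique_max by blast
  have "logit_lik n x b \<le> logit_lik n x (b + v)"
    unfolding logit_lik_def
  proof (intro prod_mono conjI)
    fix i
    assume "i \<in> {..<n}"
    then have "x i \<bullet> (b + v) \<le> x i \<bullet> b"
      using nonpos by (simp add: inner_add_right)
    then show "1 / (1 + exp (x i \<bullet> b)) \<le> 1 / (1 + exp (x i \<bullet> (b + v)))"
      by (intro divide_left_mono) auto
  qed auto
  then have "b + v = b"
    using b by (intro b_unique) (auto intro: order_trans)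
  with \<open>v \<noteq> 0\<close> show False
    by simp
qed

text \<open>The decay rate is the minimum over the unit sphere of the positively homogeneous
  function h, which is positive there by the previous lemma.\<close>
lemma logit_lik_exp_decay:
  fixes x :: "nat \<Rightarrow> real ^ 'd"
  assumes unique_max: "\<exists>!b. \<forall>\<beta>. logit_lik n x \<beta> \<le> logit_lik n x b"
  obtains c where "c > 0" and "\<And>\<beta>. logit_lik n x \<beta> \<le> exp (- c * norm \<beta>)"
proof -
  define h where "h v = (\<Sum>i<n. max 0 (x i \<bullet> v))" for v :: "real ^ 'd"
  have "continuous_on (sphere 0 1) h"
    unfolding h_def by (intro continuous_intros)
  moreover have "sphere (0 :: real ^ 'd) 1 \<noteq> {}"
    by simp
  ultimately obtain v0 where v0: "v0 \<in> sphere 0 1" and v0_min: "\<And>v. v \<in> sphere 0 1 \<Longrightarrow> h v0 \<le> h v"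
    using continuous_attains_inf[OF compact_sphere] by blast
  then have "v0 \<noteq> 0"
    by auto
  then obtain i where "i < n" "0 < x i \<bullet> v0"
    using logit_unique_max_pos_direction[OF unique_max] by blast
  then have "0 < h v0"
    unfolding h_def by (intro sum_pos2[of _ i]) auto
  have lower: "h v0 * norm \<beta> \<le> h \<beta>" for \<beta>
  proof (cases "\<beta> = 0")
    case False
    define v where "v = \<beta> /\<^sub>R norm \<beta>"
    have "h \<beta> = norm \<beta> * h v"
      unfolding h_def sum_distrib_left
    proof (rule sum.cong[OF refl])
      fix i
      have "x i \<bullet> \<beta> = norm \<beta> * (x i \<bullet> v)"
        using False by (simp add: v_def inner_scaleR_right)
      then show "max 0 (x i \<bullet> \<beta>) = norm \<beta> * max 0 (x i \<bullet> v)"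
        by (simp add: max_mult_distrib_left)
    qed
    moreover have "h v0 \<le> h v"
      using False by (intro v0_min) (simp add: v_def)
    ultimately show ?thesis
      by (simp add: mult.commute mult_left_mono)
  qed (simp add: h_def)
  have "logit_lik n x \<beta> \<le> exp (- h v0 * norm \<beta>)" for \<beta>
  proof -
    have "exp (- h \<beta>) \<le> exp (- h v0 * norm \<beta>)"
      using lower[of \<beta>] by simp
    then show ?thesis
      using logit_lik_le_exp_pos_part[of n x \<beta>] unfolding h_def by linarith
  qed
  with \<open>0 < h v0\<close> show ?thesis
    by (rule that)
qed

lemma integrable_logit_lik:
  assumes unique_max: "\<exists>!b. \<forall>\<beta>. logit_lik n x \<beta> \<le> logit_lik n x b"
  shows "integrable lborel (logit_lik n x)"
proof -
  obtain c where "c > 0" and decay: "\<And>\<beta>. logit_lik n x \<beta> \<le> exp (- c * norm \<beta>)"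
    using logit_lik_exp_decay[OF unique_max] by blast
  show ?thesis
  proof (rule Bochner_Integration.integrable_bound[OF integrable_exp_neg_norm[OF \<open>c > 0\<close>]])
    show "AE \<beta> in lborel. norm (logit_lik n x \<beta>) \<le> norm (exp (- c * norm \<beta>))"
    proof (rule AE_I2)
      fix \<beta>
      show "norm (logit_lik n x \<beta>) \<le> norm (exp (- c * norm \<beta>))"
        using decay[of \<beta>] logit_lik_pos[of n x \<beta>] by simp
    qed
  qed measurable
qed

lemma integral_logit_lik_pos:
  assumes int: "integrable lborel (logit_lik n x)"
  shows "0 < (\<integral>\<beta>. logit_lik n x \<beta> \<partial>lborel)"
proof -
  have nonneg: "AE \<beta> in lborel. 0 \<le> logit_lik n x \<beta>"
    by (simp add: less_imp_le[OF logit_lik_pos])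
  have "\<not> (AE \<beta> in lborel. logit_lik n x \<beta> = 0)"
    using AE_iff_measurable[of "space lborel" "lborel :: (real ^ 'd) measure" "\<lambda>_. False"]
    by (simp add: less_imp_neq[OF logit_lik_pos, symmetric])
  then show ?thesis
    using integral_nonneg_AE[OF nonneg] integral_nonneg_eq_0_iff_AE[OF int nonneg] by linarith
qed

lemma integrable_logit_lik_score:
  assumes int: "integrable lborel (logit_lik n x)"
  shows "integrable lborel (\<lambda>\<beta>. logit_lik n x \<beta> * logit_score n x \<beta> a)"
proof (rule Bochner_Integration.integrable_bound)
  show "integrable lborel (\<lambda>\<beta>. (\<Sum>i<n. \<bar>x i \<bullet> a\<bar>) * logit_lik n x \<beta>)"
    using int by simp
  show "(\<lambda>\<beta>. logit_lik n x \<beta> * logit_score n x \<beta> a) \<in> borel_measurable lborel"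
    unfolding logit_score_def by measurable
  show "AE \<beta> in lborel. norm (logit_lik n x \<beta> * logit_score n x \<beta> a)
                         \<le> norm ((\<Sum>i<n. \<bar>x i \<bullet> a\<bar>) * logit_lik n x \<beta>)"
  proof (rule AE_I2)
    fix \<beta>
    show "norm (logit_lik n x \<beta> * logit_score n x \<beta> a) \<le> norm ((\<Sum>i<n. \<bar>x i \<bullet> a\<bar>) * logit_lik n x \<beta>)"
      using abs_logit_score_le[of n x \<beta> a] logit_lik_pos[of n x \<beta>]
      by (simp add: abs_mult mult.commute mult_left_mono)
  qed
qed

lemma integral_logit_lik_score_eq_0:
  assumes int: "integrable lborel (logit_lik n x)"
  shows "(\<integral>\<beta>. logit_lik n x \<beta> * logit_score n x \<beta> a \<partial>lborel) = 0"
proof -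
  define K where "K = (\<Sum>i<n. \<bar>x i \<bullet> a\<bar>)"
  have "K \<ge> 0"
    unfolding K_def by (simp add: sum_nonneg)
  have "(\<integral>\<beta>. - (logit_lik n x \<beta> * logit_score n x \<beta> a) \<partial>lborel) = 0"
  proof (rule integral_directional_derivative_eq_0[OF int])
    show "integrable lborel (\<lambda>\<beta>. K * exp K * logit_lik n x \<beta>)"
      using int by simp
    show "((\<lambda>t. logit_lik n x (\<beta> + t *\<^sub>R a)) has_real_derivative
            - (logit_lik n x \<beta> * logit_score n x \<beta> a)) (at 0)" for \<beta>
      using logit_lik_line_derivative[of n x \<beta> a 0] by simp
    show "\<bar>logit_lik n x (\<beta> + t *\<^sub>R a) - logit_lik n x \<beta>\<bar> \<le> t * (K * exp K * logit_lik n x \<beta>)"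
      if "0 < t" "t \<le> 1" for \<beta> t
    proof -
      obtain z where "0 < z" "z < t" and mvt: "logit_lik n x (\<beta> + t *\<^sub>R a) - logit_lik n x \<beta>
          = - (t * (logit_lik n x (\<beta> + z *\<^sub>R a) * logit_score n x (\<beta> + z *\<^sub>R a) a))"
        using MVT2[OF \<open>0 < t\<close> logit_lik_line_derivative[of n x \<beta> a]] by auto
      have "logit_lik n x (\<beta> + z *\<^sub>R a) \<le> exp (z * K) * logit_lik n x \<beta>"
        using logit_lik_add_le[of n x \<beta> "z *\<^sub>R a"] \<open>0 < z\<close>
        by (simp add: K_def abs_mult sum_distrib_left)
      also have "\<dots> \<le> exp K * logit_lik n x \<beta>"
        using \<open>0 < z\<close> \<open>z < t\<close> \<open>t \<le> 1\<close> \<open>K \<ge> 0\<close>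
        by (intro mult_right_mono) (auto simp: less_imp_le[OF logit_lik_pos] mult_left_le_one_le)
      finally have "logit_lik n x (\<beta> + z *\<^sub>R a) * \<bar>logit_score n x (\<beta> + z *\<^sub>R a) a\<bar>
          \<le> exp K * logit_lik n x \<beta> * K"
        using abs_logit_score_le[of n x "\<beta> + z *\<^sub>R a" a] \<open>K \<ge> 0\<close>
        by (intro mult_mono) (auto simp: K_def less_imp_le[OF logit_lik_pos])
      with \<open>0 < t\<close> show ?thesis
        unfolding mvt by (simp add: abs_mult abs_of_pos[OF logit_lik_pos] mult_left_mono mult_ac)
    qed
  qed
  then show ?thesis
    by simp
qed

lemma frechet_derivative_ln_logit_post:
  assumes "0 < (\<integral>b. logit_lik n x b \<partial>lborel)"
  shows "frechet_derivative (\<lambda>b. ln (logit_post n x b)) (at \<beta>) = (\<lambda>v. - logit_score n x \<beta> v)"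
proof -
  define Z where "Z = (\<integral>b. logit_lik n x b \<partial>lborel)"
  have "(\<lambda>b. ln (logit_post n x b)) = (\<lambda>b. - logit_nll n x b - ln Z)"
    using assms by (simp add: Z_def logit_post_def logit_lik_eq_exp ln_div fun_eq_iff)
  moreover have "((\<lambda>b. - logit_nll n x b - ln Z) has_derivative (\<lambda>v. - logit_score n x \<beta> v)) (at \<beta>)"
    using has_derivative_diff[OF has_derivative_minus[OF has_derivative_logit_nll] has_derivative_const]
    by simp
  ultimately show ?thesis
    by (metis frechet_derivative_at)
qed

lemma abs_sphere_flux_logit_post_le:
  fixes x :: "nat \<Rightarrow> real ^ 'd" and a :: "real ^ 'd"
  assumes "0 < \<rho>" and decay: "\<And>\<beta>. logit_lik n x \<beta> \<le> exp (- c * norm \<beta>)"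
  defines "Z \<equiv> \<integral>b. logit_lik n x b \<partial>lborel"
  shows "\<bar>\<integral>\<beta>. logit_post n x \<beta> * (a \<bullet> (\<beta> /\<^sub>R \<rho>)) \<partial>sphere_measure \<rho>\<bar>
           \<le> real CARD('d) / \<rho> * (norm a * exp (- c * \<rho>) / Z) *
              (unit_ball_vol (real CARD('d)) * \<rho> ^ CARD('d))"
proof (rule abs_integral_sphere_measure_le[OF \<open>0 < \<rho>\<close>])
  have "0 \<le> Z"
    unfolding Z_def by (intro integral_nonneg_AE) (simp add: less_imp_le[OF logit_lik_pos])
  then show "0 \<le> norm a * exp (- c * \<rho>) / Z"
    by simp
  show "(\<lambda>\<beta>. logit_post n x \<beta> * (a \<bullet> (\<beta> /\<^sub>R \<rho>))) \<in> borel_measurable borel"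
    unfolding logit_post_def by measurable
  fix y :: "real ^ 'd"
  assume "norm y = \<rho>"
  then have post_le: "logit_post n x y \<le> exp (- c * \<rho>) / Z"
    using decay[of y] \<open>0 \<le> Z\<close> by (simp add: logit_post_def Z_def[symmetric] divide_right_mono)
  have post_nonneg: "0 \<le> logit_post n x y"
    using \<open>0 \<le> Z\<close> by (simp add: logit_post_def Z_def[symmetric] less_imp_le[OF logit_lik_pos])
  have "\<bar>a \<bullet> (y /\<^sub>R \<rho>)\<bar> \<le> norm a"
    using Cauchy_Schwarz_ineq2[of a "y /\<^sub>R \<rho>"] \<open>norm y = \<rho>\<close> \<open>0 < \<rho>\<close> by simp
  then have "logit_post n x y * \<bar>a \<bullet> (y /\<^sub>R \<rho>)\<bar> \<le> exp (- c * \<rho>) / Z * norm a"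
    using post_le post_nonneg by (intro mult_mono) auto
  then show "\<bar>logit_post n x y * (a \<bullet> (y /\<^sub>R \<rho>))\<bar> \<le> norm a * exp (- c * \<rho>) / Z"
    using post_nonneg by (simp add: abs_mult mult.commute)
qed

lemma sphere_flux_logit_post_tendsto_0:
  fixes x :: "nat \<Rightarrow> real ^ 'd" and a :: "real ^ 'd"
  assumes unique_max: "\<exists>!b. \<forall>\<beta>. logit_lik n x \<beta> \<le> logit_lik n x b"
  shows "((\<lambda>\<rho>. \<integral>\<beta>. logit_post n x \<beta> * (a \<bullet> (\<beta> /\<^sub>R \<rho>)) \<partial>sphere_measure \<rho>) \<longlongrightarrow> 0) at_top"
proof -
  obtain c where "c > 0" and decay: "\<And>\<beta>. logit_lik n x \<beta> \<le> exp (- c * norm \<beta>)"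
    using logit_lik_exp_decay[OF unique_max] by blast
  define D where "D = CARD('d)"
  define M where "M = real D * (norm a / (\<integral>b. logit_lik n x b \<partial>lborel)) * unit_ball_vol (real D)"
  define bound where "bound \<rho> = M / \<rho> * exp (- c * \<rho>) * \<rho> ^ D" for \<rho>
  have "eventually (\<lambda>\<rho>. norm (\<integral>\<beta>. logit_post n x \<beta> * (a \<bullet> (\<beta> /\<^sub>R \<rho>)) \<partial>sphere_measure \<rho>)
          \<le> bound \<rho>) at_top"
    using eventually_gt_at_top[of 0]
  proof eventually_elim
    case (elim \<rho>)
    from abs_sphere_flux_logit_post_le[OF elim decay, of a]
    show ?case
      by (simp add: bound_def M_def D_def ac_simps)
  qed
  moreover have "(bound \<longlongrightarrow> 0) at_top"
    unfolding bound_def using \<open>c > 0\<close> by real_asymp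
  ultimately show ?thesis
    by (rule Lim_null_comparison)
qed

theorem mainTheorem9:
  fixes n :: nat and x :: "nat \<Rightarrow> real ^ 'd" and a :: "real ^ 'd"
  assumes nonzero: "\<And>i. i < n \<Longrightarrow> x i \<noteq> 0"
    and unique_max: "\<exists>!b. \<forall>\<beta>. logit_lik n x \<beta> \<le> logit_lik n x b"
  defines "P \<equiv> (\<lambda>\<beta>::real ^ 'd. \<Sum>j\<in>UNIV. a $ j * \<beta> $ j)"
  shows "((\<lambda>\<rho>. \<integral>\<beta>. logit_post n x \<beta> * frechet_derivative P (at \<beta>) (\<beta> /\<^sub>R \<rho>) \<partial>sphere_measure \<rho>)
            \<longlongrightarrow> 0) at_top \<and>
         integrable lborel (\<lambda>\<beta>. logit_post n x \<beta> *
            (- (1/2) * frechet_derivative (\<lambda>b. ln (logit_post n x b)) (at \<beta>) a)) \<and>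
         (\<integral>\<beta>. logit_post n x \<beta> *
            (- (1/2) * frechet_derivative (\<lambda>b. ln (logit_post n x b)) (at \<beta>) a) \<partial>lborel) = 0"
proof -
  have int: "integrable lborel (logit_lik n x)"
    using integrable_logit_lik[OF unique_max] .
  define Z where "Z = (\<integral>b. logit_lik n x b \<partial>lborel)"
  have "P = (\<lambda>v. a \<bullet> v)"
    unfolding P_def by (simp add: inner_vec_def fun_eq_iff)
  then have grad_P: "frechet_derivative P (at \<beta>) = (\<lambda>v. a \<bullet> v)" for \<beta>
    by (metis bounded_linear_imp_has_derivative bounded_linear_inner_right frechet_derivative_at)
  have score: "logit_post n x \<beta> * (- (1/2) * frechet_derivative (\<lambda>b. ln (logit_post n x b)) (at \<beta>) a)
      = logit_lik n x \<beta> * logit_score n x \<beta> a / (2 * Z)" for \<beta>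
    using frechet_derivative_ln_logit_post[OF integral_logit_lik_pos[OF int]]
    by (simp add: logit_post_def Z_def)
  show ?thesis
    unfolding grad_P score
    using sphere_flux_logit_post_tendsto_0[OF unique_max] integrable_logit_lik_score[OF int]
      integral_logit_lik_score_eq_0[OF int] by simp
qed

end
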